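(* Let $n\ge2$ and $1\le s<\ell$ be integers, and consider the saturation SQGT model with thresholds $(1,2,\dots,s)$, in which a test $\mathbf{x}\in\{0,1\}^n$ applied to $\mathbf{b}$ returns $\min(\mathbf{x}\cdot\mathbf{b},s)$. Then there exists a binary test matrix $\mathbf{C}$ with $n$ columns and at most $\frac{2\ell}{s}+2\log_2 n+3$ rows that solves $\mathrm{Burst}(n,\le\ell,\underline{\eta})$, i.e. any two distinct bursts in $\{0,1\}^n$ of lengths between $1$ and $\ell$ yield distinct outcome vectors.
   Context: Items are indexed $0,\dots,n-1$. A burst with head $a$ and tail $t$ ($0\le a\le t\le n-1$) is the vector in $\{0,1\}^n$ whose $j$-th coordinate is $1$ iff $a\le j\le t$; its length is $t-a+1$. $\mathrm{Burst}(n,\le\ell,\underline{\eta})$ is the problem of identifying an unknown burst of length in $\{1,\dots,\ell\}$ from the outcome vector (entrywise outcomes of the rows of the test matrix). *)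

theory Defs
  imports Complex_Main
begin

definition burst :: "nat \<Rightarrow> nat \<Rightarrow> nat \<Rightarrow> bool list" where
  "burst n a t = map (\<lambda>j. a \<le> j \<and> j \<le> t) [0..<n]"

definition valid_burst :: "nat \<Rightarrow> nat \<Rightarrow> nat \<Rightarrow> nat \<Rightarrow> bool" where
  "valid_burst n l a t \<longleftrightarrow> a \<le> t \<and> t < n \<and> t - a + 1 \<le> l"

definition bdot :: "bool list \<Rightarrow> bool list \<Rightarrow> nat" where
  "bdot x b = length (filter (\<lambda>(u, v). u \<and> v) (zip x b))"

definition sat_outcome :: "nat \<Rightarrow> bool list \<Rightarrow> bool list \<Rightarrow> nat" where
  "sat_outcome s x b = min (bdot x b) s"

definition outcome_vec :: "nat \<Rightarrow> bool list list \<Rightarrow> bool list \<Rightarrow> nat list" where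
  "outcome_vec s C b = map (\<lambda>x. sat_outcome s x b) C"

definition solves_burst :: "nat \<Rightarrow> nat \<Rightarrow> nat \<Rightarrow> bool list list \<Rightarrow> bool" where
  "solves_burst n l s C \<longleftrightarrow>
     (\<forall>a t a' t'. valid_burst n l a t \<longrightarrow> valid_burst n l a' t' \<longrightarrow>
        burst n a t \<noteq> burst n a' t' \<longrightarrow>
        outcome_vec s C (burst n a t) \<noteq> outcome_vec s C (burst n a' t'))"

end

theory Submission
  imports Defs "HOL-Library.Log_Nat"
begin

text \<open>
  Cut the items into blocks of \<open>s\<close> consecutive positions and colour block \<open>q\<close> with
  \<open>q mod M\<close>, where \<open>M = (l - 1) div s + 3\<close>. A burst meets at most \<open>M - 1\<close> consecutive
  blocks, so it contains at most \<open>s\<close> items of each colour and one row per colour counts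
  them exactly despite saturation. These counts sum to the length; the colours that occur
  form a proper cyclic interval whose first element is the colour of the head's block;
  and the count of that colour is \<open>s - a mod s\<close> unless the burst stays inside one block,
  in which case rows reading the bits of \<open>j mod s\<close> give the sum of the offsets and hence
  \<open>a mod s\<close>. So \<open>a mod (s * M)\<close> is known. The burst meets at most two consecutive
  superblocks of \<open>s * M\<close> items, with indices \<open>q\<close> and \<open>q + d\<close>, \<open>d \<le> 1\<close>. Saturated or not,
  a row tells whether it meets the burst at all, so one row for bit \<open>i\<close> of the superblock
  index being set and one for it being clear reveal the set \<open>{bit q i, bit (q + d) i}\<close>;
  these sets determine \<open>q\<close>.
\<close>

section \<open>Residues of consecutive integers\<close>

lemma mod_eq_imp_eq_of_diff_less:
  fixes u v M :: nat
  assumes "u mod M = v mod M" "u \<le> v" "v - u < M"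
  shows "u = v"
  by (metis assms mod_eq_dvd_iff_nat nat_dvd_not_less order_le_imp_less_or_eq zero_less_diff)

lemma inj_on_mod_interval:
  fixes x y M :: nat
  assumes "y - x < M"
  shows "inj_on (\<lambda>q. q mod M) {x..y}"
proof (rule inj_onI)
  fix u v assume uv: "u \<in> {x..y}" "v \<in> {x..y}" "u mod M = v mod M"
  then have "max u v - min u v < M"
    using assms by auto
  then show "u = v"
    using uv(3) mod_eq_imp_eq_of_diff_less[of "min u v" M "max u v"]
    by (auto simp: min_def max_def split: if_splits)
qed

lemma Suc_mod_ne_start_mod:
  fixes M qa qt z :: nat
  assumes "qt - qa + 1 < M" "z \<in> {qa..qt}"
  shows "Suc z mod M \<noteq> qa mod M"
proof
  assume eq: "Suc z mod M = qa mod M"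
  have "qa \<le> Suc z" "Suc z - qa < M"
    using assms by auto
  with eq[symmetric] have "qa = Suc z"
    by (rule mod_eq_imp_eq_of_diff_less)
  then show False
    using assms(2) by simp
qed

lemma mod_image_interval_start_iff:
  fixes M qa qt x :: nat
  assumes "qa \<le> qt" "qt - qa + 1 < M"
  defines "I \<equiv> (\<lambda>q. q mod M) ` {qa..qt}"
  shows "x \<in> I \<and> (\<forall>z\<in>I. Suc z mod M \<noteq> x) \<longleftrightarrow> x = qa mod M"
proof
  assume x: "x \<in> I \<and> (\<forall>z\<in>I. Suc z mod M \<noteq> x)"
  then obtain q where q: "q \<in> {qa..qt}" "x = q mod M"
    by (auto simp: I_def)
  show "x = qa mod M"
  proof (rule ccontr)
    assume "x \<noteq> qa mod M"
    then have "q \<noteq> qa"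
      using q(2) by auto
    then have pred: "q - 1 \<in> {qa..qt}" "Suc (q - 1) = q"
      using q(1) by auto
    have "(q - 1) mod M \<in> I"
      using pred(1) unfolding I_def by (rule imageI)
    moreover have "Suc ((q - 1) mod M) mod M = x"
      unfolding mod_Suc_eq pred(2) q(2) ..
    ultimately show False
      using x by blast
  qed
next
  assume x: "x = qa mod M"
  have "x \<in> I"
    unfolding I_def x using assms(1) by simp
  moreover have "Suc z mod M \<noteq> x" if "z \<in> I" for z
  proof -
    obtain q where "q \<in> {qa..qt}" "z = q mod M"
      using \<open>z \<in> I\<close> by (auto simp: I_def)
    then show ?thesis
      unfolding x using Suc_mod_ne_start_mod[OF assms(2)] by (simp only: mod_Suc_eq not_False_eq_True)
  qed
  ultimately show "x \<in> I \<and> (\<forall>z\<in>I. Suc z mod M \<noteq> x)"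
    by blast
qed

lemma mod_image_interval_eqD:
  fixes M qa qt qa' qt' :: nat
  assumes "qa \<le> qt" "qt - qa + 1 < M" "qa' \<le> qt'" "qt' - qa' + 1 < M"
    and eq: "(\<lambda>q. q mod M) ` {qa..qt} = (\<lambda>q. q mod M) ` {qa'..qt'}"
  shows "qt - qa = qt' - qa' \<and> qa mod M = qa' mod M"
proof
  have "card ((\<lambda>q. q mod M) ` {qa..qt}) = qt + 1 - qa"
    using card_image[OF inj_on_mod_interval] assms(2) by simp
  moreover have "card ((\<lambda>q. q mod M) ` {qa'..qt'}) = qt' + 1 - qa'"
    using card_image[OF inj_on_mod_interval] assms(4) by simp
  ultimately show "qt - qa = qt' - qa'"
    using eq assms(1,3) by simp
  show "qa mod M = qa' mod M"
    using mod_image_interval_start_iff[OF assms(1,2), of "qa mod M"]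
      mod_image_interval_start_iff[OF assms(3,4), of "qa mod M"] eq
    by simp
qed

lemma adjacent_parities_determine_gap:
  fixes q d q' d' :: nat
  assumes "d \<le> 1" "d' \<le> 1" "{odd q, odd (q + d)} = {odd q', odd (q' + d')}"
  shows "d = d'"
proof -
  have gap: "d = 1 \<longleftrightarrow> odd q \<noteq> odd (q + d)" if "d \<le> 1" for q d :: nat
    using that by (cases "d = 0") auto
  have "(x \<noteq> y) = (x' \<noteq> y')" if "{x, y} = {x', y'}" for x y x' y' :: bool
    using that by (cases x; cases y; cases x'; cases y') auto
  from this[OF assms(3)] have "(d = 1) = (d' = 1)"
    by (simp only: gap[of d q, OF assms(1)] gap[of d' q', OF assms(2)])
  then show ?thesis
    using assms(1,2) by (auto simp: le_Suc_eq)
qed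

lemma div_two_add_carry:
  fixes q d :: nat
  assumes "d \<le> 1"
  shows "(q + d) div 2 = q div 2 + (q mod 2 + d) div 2"
  using assms div_add1_eq[of q d 2] by (auto simp: le_Suc_eq)

lemma adjacent_bit_sets_determine:
  fixes q d q' d' :: nat
  assumes "d \<le> 1" "d' \<le> 1" "q + d < 2 ^ K" "q' + d' < 2 ^ K"
    and "\<And>i. i < K \<Longrightarrow> {bit q i, bit (q + d) i} = {bit q' i, bit (q' + d') i}"
  shows "q = q' \<and> d = d'"
  using assms
proof (induction K arbitrary: q d q' d')
  case 0
  then show ?case
    by simp
next
  case (Suc K)
  have lowest: "{odd q, odd (q + d)} = {odd q', odd (q' + d')}"
    using Suc.prems(5)[of 0] by (simp only: bit_0 zero_less_Suc)
  have "d = d'"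
    by (rule adjacent_parities_determine_gap[OF Suc.prems(1,2) lowest])
  \<comment> \<open>Halving turns \<open>q, q + d\<close> into \<open>q div 2, q div 2 + e\<close> with a carry \<open>e \<le> 1\<close>.\<close>
  define e where "e = (q mod 2 + d) div 2"
  define e' where "e' = (q' mod 2 + d') div 2"
  have carry: "(q + d) div 2 = q div 2 + e" "(q' + d') div 2 = q' div 2 + e'"
    unfolding e_def e'_def by (intro div_two_add_carry Suc.prems(1,2))+
  have "e \<le> 1" "e' \<le> 1"
    using Suc.prems(1,2) unfolding e_def e'_def by auto
  moreover have "q div 2 + e < 2 ^ K" "q' div 2 + e' < 2 ^ K"
    using Suc.prems(3,4) carry by auto
  moreover have "{bit (q div 2) i, bit (q div 2 + e) i} = {bit (q' div 2) i, bit (q' div 2 + e') i}"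
    if "i < K" for i
    using Suc.prems(5)[of "Suc i"] that by (simp only: bit_Suc carry Suc_less_eq)
  ultimately have halves: "q div 2 = q' div 2" "e = e'"
    using Suc.IH by blast+
  have "q mod 2 = q' mod 2"
  proof (cases "d = 0")
    case True
    then have "odd q = odd q'"
      using lowest \<open>d = d'\<close> by auto
    then show ?thesis
      by (simp add: mod2_eq_if)
  next
    case False
    then have "e = q mod 2" "e' = q' mod 2"
      using Suc.prems(1) \<open>d = d'\<close> by (auto simp: e_def e'_def)
    then show ?thesis
      using halves by simp
  qed
  then show ?case
    using halves(1) \<open>d = d'\<close> by (metis div_mult_mod_eq)
qed

section \<open>Blocks of consecutive integers\<close>

lemma div_le_div_add_of_le:
  fixes s a t k :: nat
  assumes "0 < s" "t \<le> a + s * k"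
  shows "t div s \<le> a div s + k"
  using div_le_mono[OF assms(2), of s] assms(1) by simp

lemma mem_block_interval:
  fixes s j :: nat
  assumes "0 < s"
  shows "j \<in> {s * (j div s)..<s * (j div s) + s}"
proof -
  have "s * (j div s) + j mod s = j"
    by (rule mult_div_mod_eq)
  moreover have "j mod s < s"
    using assms by simp
  ultimately show ?thesis
    unfolding atLeastLessThan_iff by linarith
qed

lemma le_mult_div_Suc:
  fixes s l :: nat
  assumes "0 < s" "0 < l"
  shows "l \<le> s * ((l - 1) div s + 1)"
  using mem_block_interval[OF assms(1), of "l - 1"] assms(2) by (simp add: algebra_simps)

lemma mod_add_within_block:
  fixes s a t k :: nat
  assumes "a div s = t div s" "a + k \<le> t"
  shows "(a + k) mod s = a mod s + k"
proof -
  have "(a + k) div s = a div s"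
    using assms div_le_mono[of a "a + k" s] div_le_mono[of "a + k" t s] by simp
  then have "s * (a div s) + (a + k) mod s = a + k"
    using mult_div_mod_eq[of s "a + k"] by simp
  moreover have "s * (a div s) + a mod s = a"
    by (rule mult_div_mod_eq)
  ultimately show ?thesis
    by linarith
qed

lemma bex_interval_div_iff:
  fixes s a t :: nat
  assumes "0 < s" "a \<le> t"
  shows "(\<exists>j\<in>{a..t}. R (j div s)) \<longleftrightarrow> (\<exists>q\<in>{a div s..t div s}. R q)"
proof
  assume "\<exists>j\<in>{a..t}. R (j div s)"
  then show "\<exists>q\<in>{a div s..t div s}. R q"
    by (auto intro!: div_le_mono)
next
  assume "\<exists>q\<in>{a div s..t div s}. R q"
  then obtain q where q: "a div s \<le> q" "q \<le> t div s" "R q" by auto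
  define j where "j = max a (s * q)"
  have "j \<le> t"
    using q(2) assms by (simp add: j_def less_eq_div_iff_mult_less_eq mult.commute)
  moreover have "j div s = q"
    using q(1) assms(1) unfolding j_def
    by (metis div_mult_self1_is_m le_neq_implies_less less_eq_div_iff_mult_less_eq less_le_not_le
        max_def mult.commute nat_le_linear)
  ultimately show "\<exists>j\<in>{a..t}. R (j div s)"
    using q(3) by (intro bexI[of _ j]) (auto simp: j_def)
qed

lemma bex_adjacent_iff:
  fixes qa qt :: nat
  assumes "qa \<le> qt" "qt \<le> qa + 1"
  shows "(\<exists>q\<in>{qa..qt}. R q) \<longleftrightarrow> R qa \<or> R qt"
  using assms by (auto simp: le_Suc_eq)

lemma bex_interval_adjacent_blocks_iff:
  fixes W a t :: nat
  assumes "0 < W" "a \<le> t" "t \<le> a + W"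
  shows "(\<exists>j\<in>{a..t}. R (j div W)) \<longleftrightarrow> R (a div W) \<or> R (t div W)"
proof -
  have "a div W \<le> t div W" "t div W \<le> a div W + 1"
    using div_le_mono[OF assms(2)] div_le_div_add_of_le[OF assms(1), of t a 1] assms(3) by simp_all
  then show ?thesis
    using bex_interval_div_iff[OF assms(1,2)] bex_adjacent_iff by simp
qed

section \<open>Counting in an interval\<close>

definition interval_count :: "(nat \<Rightarrow> bool) \<Rightarrow> nat \<Rightarrow> nat \<Rightarrow> nat" where
  "interval_count P a t = card {j \<in> {a..t}. P j}"

lemma interval_count_pos_iff: "0 < interval_count P a t \<longleftrightarrow> (\<exists>j\<in>{a..t}. P j)"
  by (auto simp: interval_count_def card_gt_0_iff)

lemma interval_count_le: "interval_count P a t \<le> t + 1 - a"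
  unfolding interval_count_def by (rule order_trans[OF card_mono[of "{a..t}"]]) auto

lemma sum_interval_count_fibres:
  fixes M :: nat
  assumes "\<And>j. f j < M"
  shows "(\<Sum>r<M. interval_count (\<lambda>j. f j = r) a t) = t + 1 - a"
proof -
  have "(\<Sum>r<M. interval_count (\<lambda>j. f j = r) a t) = (\<Sum>r<M. \<Sum>j\<in>{j \<in> {a..t}. f j = r}. 1)"
    by (simp add: interval_count_def)
  also have "\<dots> = (\<Sum>j\<in>{a..t}. 1)"
    by (rule sum.group) (use assms in auto)
  finally show ?thesis
    by simp
qed

lemma sum_eq_weighted_bit_counts:
  assumes "\<forall>j\<in>{a..t}. f j < 2 ^ K"
  shows "(\<Sum>j\<in>{a..t}. f j) = (\<Sum>i<K. 2 ^ i * interval_count (\<lambda>j. bit (f j) i) a t)"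
proof -
  have "(\<Sum>j\<in>{a..t}. f j) = (\<Sum>j\<in>{a..t}. \<Sum>i<K. 2 ^ i * of_bool (bit (f j) i))"
  proof (rule sum.cong[OF refl])
    fix j assume "j \<in> {a..t}"
    then have "f j = take_bit K (f j)"
      using assms by (simp add: take_bit_nat_eq_self)
    also have "\<dots> = (\<Sum>i<K. 2 ^ i * of_bool (bit (f j) i))"
      by (simp flip: horner_sum_bit_eq_take_bit add: horner_sum_eq_sum atLeast0LessThan mult.commute)
    finally show "f j = (\<Sum>i<K. 2 ^ i * of_bool (bit (f j) i))" .
  qed
  also have "\<dots> = (\<Sum>i<K. 2 ^ i * (\<Sum>j\<in>{a..t}. of_bool (bit (f j) i)))"
    unfolding sum_distrib_left by (rule sum.swap)
  also have "\<dots> = (\<Sum>i<K. 2 ^ i * interval_count (\<lambda>j. bit (f j) i) a t)"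
    by (intro sum.cong refl) (simp add: interval_count_def Int_def conj_commute)
  finally show ?thesis .
qed

lemma sum_mod_single_block:
  fixes s a t :: nat
  assumes "a \<le> t" "a div s = t div s"
  shows "(\<Sum>j\<in>{a..t}. j mod s) = (t - a + 1) * (a mod s) + (\<Sum>k\<in>{0..t - a}. k)"
proof -
  have "(\<Sum>j\<in>{a..t}. j mod s) = (\<Sum>k\<in>{0..t - a}. (a + k) mod s)"
    using sum.atLeastAtMost_shift_0[OF assms(1)] by (simp add: o_def)
  also have "\<dots> = (\<Sum>k\<in>{0..t - a}. a mod s + k)"
    using mod_add_within_block[OF assms(2)] assms(1) by (intro sum.cong) auto
  finally show ?thesis
    by (simp add: sum.distrib)
qed

lemma bit_counts_determine_offset_in_block:
  fixes s B a t a' t' :: nat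
  assumes "a \<le> t" "a div s = t div s" "a' \<le> t'" "a' div s = t' div s" "t - a = t' - a'"
    and "\<forall>j\<in>{a..t}. j mod s < 2 ^ B" "\<forall>j\<in>{a'..t'}. j mod s < 2 ^ B"
    and counts: "\<And>i. i < B \<Longrightarrow>
      interval_count (\<lambda>j. bit (j mod s) i) a t = interval_count (\<lambda>j. bit (j mod s) i) a' t'"
  shows "a mod s = a' mod s"
proof -
  have "(\<Sum>j\<in>{a..t}. j mod s) = (\<Sum>j\<in>{a'..t'}. j mod s)"
    using sum_eq_weighted_bit_counts[OF assms(6)] sum_eq_weighted_bit_counts[OF assms(7)] counts
    by simp
  then have "(t - a + 1) * (a mod s) = (t - a + 1) * (a' mod s)"
    using sum_mod_single_block[OF assms(1,2)] sum_mod_single_block[OF assms(3,4)] assms(5) by simp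
  then show ?thesis
    by (simp only: mult_cancel1) simp
qed

section \<open>Residue classes of blocks\<close>

definition block_class :: "nat \<Rightarrow> nat \<Rightarrow> nat \<Rightarrow> nat \<Rightarrow> bool" where
  "block_class s M r j \<longleftrightarrow> j div s mod M = r"

lemma block_class_same_block:
  fixes s M a t :: nat
  assumes "t div s - a div s < M" "j \<in> {a..t}" "j' \<in> {a..t}"
    and "block_class s M r j" "block_class s M r j'"
  shows "j div s = j' div s"
proof -
  have "j div s \<in> {a div s..t div s}" "j' div s \<in> {a div s..t div s}"
    using assms(2,3) by (auto intro!: div_le_mono)
  then show ?thesis
    using inj_on_mod_interval[OF assms(1)] assms(4,5) by (auto simp: block_class_def inj_on_def)
qed

lemma block_class_count_le:
  fixes s M a t :: nat
  assumes "0 < s" "t div s - a div s < M"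
  shows "interval_count (block_class s M r) a t \<le> s"
proof (cases "\<exists>j\<in>{a..t}. block_class s M r j")
  case False
  then have "{j \<in> {a..t}. block_class s M r j} = {}"
    by auto
  then show ?thesis
    by (metis card.empty interval_count_def zero_le)
next
  case True
  then obtain j0 where j0: "j0 \<in> {a..t}" "block_class s M r j0" by blast
  have "{j \<in> {a..t}. block_class s M r j} \<subseteq> {s * (j0 div s)..<s * (j0 div s) + s}"
  proof
    fix j assume "j \<in> {j \<in> {a..t}. block_class s M r j}"
    then have "j div s = j0 div s"
      using block_class_same_block[OF assms(2) _ j0(1) _ j0(2)] by blast
    then show "j \<in> {s * (j0 div s)..<s * (j0 div s) + s}"
      using mem_block_interval[OF assms(1), of j] by simp
  qed
  then have "interval_count (block_class s M r) a t \<le> card {s * (j0 div s)..<s * (j0 div s) + s}"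
    unfolding interval_count_def by (intro card_mono) auto
  then show ?thesis
    by simp
qed

lemma block_class_count_pos_iff:
  fixes s M a t :: nat
  assumes "0 < s" "a \<le> t"
  shows "0 < interval_count (block_class s M r) a t \<longleftrightarrow>
    r \<in> (\<lambda>q. q mod M) ` {a div s..t div s}"
  unfolding interval_count_pos_iff block_class_def bex_interval_div_iff[OF assms, of "\<lambda>q. q mod M = r"]
  by auto

lemma block_class_count_first_block:
  fixes s M a t :: nat
  assumes "0 < s" "t div s - a div s < M" "a div s < t div s"
  shows "interval_count (block_class s M (a div s mod M)) a t = s - a mod s"
proof -
  have "s * (a div s) + s \<le> s * (t div s)"
    using assms(3) by (metis add.commute mult_Suc_right mult_le_mono2 Suc_leI)
  also have "\<dots> \<le> t"
    by (simp add: mult.commute)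
  finally have end_le: "s * (a div s) + s \<le> t" .
  have "{j \<in> {a..t}. block_class s M (a div s mod M) j} = {a..<s * (a div s) + s}"
  proof (intro equalityI subsetI)
    fix j assume j: "j \<in> {j \<in> {a..t}. block_class s M (a div s mod M) j}"
    have "a \<in> {a..t}" "block_class s M (a div s mod M) a"
      using j by (auto simp: block_class_def)
    then have "j div s = a div s"
      using block_class_same_block[OF assms(2)] j by blast
    then show "j \<in> {a..<s * (a div s) + s}"
      using j mem_block_interval[OF assms(1), of j] by auto
  next
    fix j assume j: "j \<in> {a..<s * (a div s) + s}"
    have "s * (a div s) \<le> j"
      using j mem_block_interval[OF assms(1), of a] by (simp only: atLeastLessThan_iff) linarith
    then have "j div s = a div s"
      using j assms(1) by (intro div_nat_eqI) (auto simp: mult.commute)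
    then show "j \<in> {j \<in> {a..t}. block_class s M (a div s mod M) j}"
      using j end_le by (auto simp: block_class_def)
  qed
  moreover have "s * (a div s) + s - a = s - a mod s"
    using mult_div_mod_eq[of s a] by linarith
  ultimately show ?thesis
    unfolding interval_count_def by simp
qed

lemma sum_block_class_counts:
  fixes M :: nat
  assumes "0 < M"
  shows "(\<Sum>r<M. interval_count (block_class s M r) a t) = t + 1 - a"
  using sum_interval_count_fibres[of "\<lambda>j. j div s mod M" M a t] assms
  by (simp add: block_class_def[abs_def])

lemma block_span_less:
  fixes s M a t :: nat
  assumes "0 < s" "a \<le> t" "t - a < s * (M - 2)"
  shows "t div s - a div s + 1 < M"
proof -
  have "0 < M - 2"
    using assms(3) by (metis gr0I mult_0_right not_less0)
  moreover have "t div s \<le> a div s + (M - 2)"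
    using assms by (intro div_le_div_add_of_le) auto
  ultimately show ?thesis
    by linarith
qed

lemma mod_image_blocks_eq_of_counts_eq:
  fixes s M a t a' t' :: nat
  assumes "0 < s" "0 < M" "a \<le> t" "a' \<le> t'"
    and counts: "\<And>r. r < M \<Longrightarrow>
      interval_count (block_class s M r) a t = interval_count (block_class s M r) a' t'"
  shows "(\<lambda>q. q mod M) ` {a div s..t div s} = (\<lambda>q. q mod M) ` {a' div s..t' div s}"
proof (intro set_eqI)
  fix r
  show "r \<in> (\<lambda>q. q mod M) ` {a div s..t div s} \<longleftrightarrow> r \<in> (\<lambda>q. q mod M) ` {a' div s..t' div s}"
  proof (cases "r < M")
    case True
    then show ?thesis
      using block_class_count_pos_iff[OF assms(1,3), of M r] block_class_count_pos_iff[OF assms(1,4), of M r]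
        counts[OF True] by simp
  next
    case False
    then show ?thesis
      using assms(2) by auto
  qed
qed

lemma block_class_counts_determine:
  fixes s M a t a' t' :: nat
  assumes "0 < s" "a \<le> t" "a' \<le> t'" "t - a < s * (M - 2)" "t' - a' < s * (M - 2)"
    and counts: "\<And>r. r < M \<Longrightarrow>
      interval_count (block_class s M r) a t = interval_count (block_class s M r) a' t'"
  shows "t - a = t' - a'" and "t div s - a div s = t' div s - a' div s"
    and "a div s mod M = a' div s mod M" and "a div s < t div s \<Longrightarrow> a mod s = a' mod s"
proof -
  have span: "t div s - a div s + 1 < M" "t' div s - a' div s + 1 < M"
    using block_span_less[OF assms(1)] assms(2-5) by blast+
  have blocks: "a div s \<le> t div s" "a' div s \<le> t' div s"
    using assms(2,3) by (simp_all add: div_le_mono)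
  show "t - a = t' - a'"
    using sum_block_class_counts[of M s a t] sum_block_class_counts[of M s a' t'] counts assms(2,3) span
    by simp
  have "0 < M"
    using span by simp
  then have "(\<lambda>q. q mod M) ` {a div s..t div s} = (\<lambda>q. q mod M) ` {a' div s..t' div s}"
    using mod_image_blocks_eq_of_counts_eq[OF assms(1) _ assms(2,3)] counts by blast
  then have starts: "t div s - a div s = t' div s - a' div s \<and> a div s mod M = a' div s mod M"
    using mod_image_interval_eqD[OF blocks(1) span(1) blocks(2) span(2)] by blast
  then show "t div s - a div s = t' div s - a' div s" and "a div s mod M = a' div s mod M"
    by simp_all
  assume "a div s < t div s"
  moreover have "a' div s < t' div s"
    using calculation starts blocks by linarith
  ultimately have "interval_count (block_class s M (a div s mod M)) a t = s - a mod s"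
    "interval_count (block_class s M (a div s mod M)) a' t' = s - a' mod s"
    using block_class_count_first_block[OF assms(1)] span starts by (metis add_lessD1)+
  moreover have "a div s mod M < M"
    using \<open>0 < M\<close> by simp
  ultimately have "s - a mod s = s - a' mod s"
    using counts by metis
  then show "a mod s = a' mod s"
    using assms(1) mod_less_divisor[OF assms(1), of a] mod_less_divisor[OF assms(1), of a'] by linarith
qed

lemma block_bits_determine_block:
  fixes W K a t a' t' :: nat
  assumes "0 < W" "a \<le> t" "t \<le> a + W" "a' \<le> t'" "t' \<le> a' + W"
    and "t div W < 2 ^ K" "t' div W < 2 ^ K"
    and ones: "\<And>i. i < K \<Longrightarrow> (\<exists>j\<in>{a..t}. bit (j div W) i) \<longleftrightarrow> (\<exists>j\<in>{a'..t'}. bit (j div W) i)"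
    and zeros: "\<And>i. i < K \<Longrightarrow>
      (\<exists>j\<in>{a..t}. \<not> bit (j div W) i) \<longleftrightarrow> (\<exists>j\<in>{a'..t'}. \<not> bit (j div W) i)"
  shows "a div W = a' div W"
proof -
  define d where "d = t div W - a div W"
  define d' where "d' = t' div W - a' div W"
  have "a div W \<le> t div W" "t div W \<le> a div W + 1" "a' div W \<le> t' div W" "t' div W \<le> a' div W + 1"
    using div_le_div_add_of_le[OF assms(1), of t a 1] div_le_div_add_of_le[OF assms(1), of t' a' 1] assms
    by (simp_all add: div_le_mono)
  then have adjacent: "d \<le> 1" "d' \<le> 1" "t div W = a div W + d" "t' div W = a' div W + d'"
    by (simp_all add: d_def d'_def)
  have bool_pair: "{x, y} = {x', y'}" if "(x \<or> y) = (x' \<or> y')" "(\<not> x \<or> \<not> y) = (\<not> x' \<or> \<not> y')"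
    for x y x' y' :: bool
    using that by (cases x; cases y; cases x'; cases y') auto
  have "{bit (a div W) i, bit (a div W + d) i} = {bit (a' div W) i, bit (a' div W + d') i}"
    if "i < K" for i
  proof (rule bool_pair)
    show "(bit (a div W) i \<or> bit (a div W + d) i) = (bit (a' div W) i \<or> bit (a' div W + d') i)"
      using ones[OF that] adjacent(3,4)
        bex_interval_adjacent_blocks_iff[OF assms(1-3), of "\<lambda>q. bit q i"]
        bex_interval_adjacent_blocks_iff[OF assms(1,4,5), of "\<lambda>q. bit q i"]
      by simp
    show "(\<not> bit (a div W) i \<or> \<not> bit (a div W + d) i) = (\<not> bit (a' div W) i \<or> \<not> bit (a' div W + d') i)"
      using zeros[OF that] adjacent(3,4)
        bex_interval_adjacent_blocks_iff[OF assms(1-3), of "\<lambda>q. \<not> bit q i"]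
        bex_interval_adjacent_blocks_iff[OF assms(1,4,5), of "\<lambda>q. \<not> bit q i"]
      by simp
  qed
  moreover have "a div W + d < 2 ^ K" "a' div W + d' < 2 ^ K"
    using adjacent(3,4) assms(6,7) by simp_all
  ultimately show ?thesis
    using adjacent_bit_sets_determine[OF adjacent(1,2)] by blast
qed

section \<open>The test matrix\<close>

definition indicator_row :: "nat \<Rightarrow> (nat \<Rightarrow> bool) \<Rightarrow> bool list" where
  "indicator_row n P = map P [0..<n]"

lemma bdot_indicator_row_burst:
  assumes "t < n"
  shows "bdot (indicator_row n P) (burst n a t) = interval_count P a t"
proof -
  have "bdot (indicator_row n P) (burst n a t) = card ({j. P j \<and> a \<le> j \<and> j \<le> t} \<inter> {0..<n})"
    by (simp add: bdot_def indicator_row_def burst_def zip_map_map zip_same_conv_map o_def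
        distinct_length_filter)
  also have "{j. P j \<and> a \<le> j \<and> j \<le> t} \<inter> {0..<n} = {j \<in> {a..t}. P j}"
    using assms by auto
  finally show ?thesis
    by (simp add: interval_count_def)
qed

lemma outcome_vec_eq_imp_saturated_count_eq:
  assumes "outcome_vec s C (burst n a t) = outcome_vec s C (burst n a' t')"
    and "t < n" "t' < n" "indicator_row n P \<in> set C"
  shows "min (interval_count P a t) s = min (interval_count P a' t') s"
  using assms by (auto simp: outcome_vec_def sat_outcome_def map_eq_conv bdot_indicator_row_burst)

lemma min_eq_imp_pos_iff:
  fixes x y s :: nat
  assumes "0 < s" "min x s = min y s"
  shows "0 < x \<longleftrightarrow> 0 < y"
  using assms by (metis min.absorb3 min_def neq0_conv)

definition burst_tests :: "nat \<Rightarrow> nat \<Rightarrow> nat \<Rightarrow> nat \<Rightarrow> nat \<Rightarrow> bool list list" where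
  "burst_tests n s M B K =
     map (\<lambda>r. indicator_row n (block_class s M r)) [0..<M]
   @ map (\<lambda>i. indicator_row n (\<lambda>j. bit (j mod s) i)) [0..<B]
   @ map (\<lambda>i. indicator_row n (\<lambda>j. bit (j div (s * M)) i)) [0..<K]
   @ map (\<lambda>i. indicator_row n (\<lambda>j. \<not> bit (j div (s * M)) i)) [0..<K]"

lemma length_burst_tests: "length (burst_tests n s M B K) = M + B + 2 * K"
  by (simp add: burst_tests_def)

lemma length_burst_tests_row: "x \<in> set (burst_tests n s M B K) \<Longrightarrow> length x = n"
  by (auto simp: burst_tests_def indicator_row_def)

lemma indicator_rows_in_burst_tests:
  "r < M \<Longrightarrow> indicator_row n (block_class s M r) \<in> set (burst_tests n s M B K)"
  "i < B \<Longrightarrow> indicator_row n (\<lambda>j. bit (j mod s) i) \<in> set (burst_tests n s M B K)"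
  "i < K \<Longrightarrow> indicator_row n (\<lambda>j. bit (j div (s * M)) i) \<in> set (burst_tests n s M B K)"
  "i < K \<Longrightarrow> indicator_row n (\<lambda>j. \<not> bit (j div (s * M)) i) \<in> set (burst_tests n s M B K)"
  by (auto simp: burst_tests_def)

lemma burst_tests_offset_in_block:
  fixes n s M B K a t a' t' :: nat
  assumes "0 < s" "min s n \<le> 2 ^ B"
    and "a \<le> t" "t < n" "a div s = t div s" "a' \<le> t'" "t' < n" "a' div s = t' div s"
    and "t - a = t' - a'"
    and sat: "\<And>P. indicator_row n P \<in> set (burst_tests n s M B K) \<Longrightarrow>
      min (interval_count P a t) s = min (interval_count P a' t') s"
  shows "a mod s = a' mod s"
proof -
  have "s * (a div s) \<le> a" "t < s * (a div s) + s"
    using mem_block_interval[OF assms(1), of a] mem_block_interval[OF assms(1), of t] assms(5)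
    by simp_all
  then have short: "t + 1 - a \<le> s" "t' + 1 - a' \<le> s"
    using assms(3,6,9) by linarith+
  have "interval_count (\<lambda>j. bit (j mod s) i) a t = interval_count (\<lambda>j. bit (j mod s) i) a' t'"
    if "i < B" for i
    using sat[OF indicator_rows_in_burst_tests(2)[OF that]] short
      interval_count_le[of "\<lambda>j. bit (j mod s) i" a t] interval_count_le[of "\<lambda>j. bit (j mod s) i" a' t']
    by (metis min_absorb1 order_trans)
  moreover have "\<forall>j\<in>{x..y}. j mod s < 2 ^ B" if "y < n" for x y
  proof
    fix j assume "j \<in> {x..y}"
    then have "j mod s < min s n"
      using that assms(1) le_less_trans[OF mod_less_eq_dividend[of j s], of n] by simp
    then show "j mod s < 2 ^ B"
      using assms(2) by linarith
  qed
  ultimately show ?thesis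
    using bit_counts_determine_offset_in_block[OF assms(3,5,6,8,9)] assms(4,7) by blast
qed

lemma burst_tests_determine_offset:
  fixes n s M B K a t a' t' :: nat
  assumes "0 < s" "min s n \<le> 2 ^ B"
    and "a \<le> t" "t < n" "t - a < s * (M - 2)" "a' \<le> t'" "t' < n" "t' - a' < s * (M - 2)"
    and sat: "\<And>P. indicator_row n P \<in> set (burst_tests n s M B K) \<Longrightarrow>
      min (interval_count P a t) s = min (interval_count P a' t') s"
  shows "t - a = t' - a'" and "a mod (s * M) = a' mod (s * M)"
proof -
  have spans: "t div s - a div s < M" "t' div s - a' div s < M"
    using block_span_less[OF assms(1) assms(3,5)] block_span_less[OF assms(1) assms(6,8)] by simp_all
  have classes: "interval_count (block_class s M r) a t = interval_count (block_class s M r) a' t'"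
    if "r < M" for r
    using sat[OF indicator_rows_in_burst_tests(1)[OF that]]
      block_class_count_le[OF assms(1) spans(1), of r] block_class_count_le[OF assms(1) spans(2), of r]
    by (metis min_absorb1)
  have blocks: "t - a = t' - a'" "t div s - a div s = t' div s - a' div s"
    "a div s mod M = a' div s mod M" "a div s < t div s \<Longrightarrow> a mod s = a' mod s"
    using block_class_counts_determine[OF assms(1,3,6,5,8)] classes by blast+
  show "t - a = t' - a'"
    by (fact blocks(1))
  have "a mod s = a' mod s"
  proof (cases "a div s < t div s")
    case True
    then show ?thesis
      by (rule blocks(4))
  next
    case False
    then have "a div s = t div s" "a' div s = t' div s"
      using blocks(2) div_le_mono[OF assms(3), of s] div_le_mono[OF assms(6), of s] by linarith+
    then show ?thesis
      using burst_tests_offset_in_block[OF assms(1-4) _ assms(6,7) _ blocks(1)] sat by blast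
  qed
  then show "a mod (s * M) = a' mod (s * M)"
    using mod_mult2_eq[of a s M] mod_mult2_eq[of a' s M] blocks(3) by simp
qed

lemma burst_tests_determine_superblock:
  fixes n s M B K a t a' t' :: nat
  assumes "0 < s" "(n - 1) div (s * M) < 2 ^ K"
    and "a \<le> t" "t < n" "t - a < s * (M - 2)" "a' \<le> t'" "t' < n" "t' - a' < s * (M - 2)"
    and sat: "\<And>P. indicator_row n P \<in> set (burst_tests n s M B K) \<Longrightarrow>
      min (interval_count P a t) s = min (interval_count P a' t') s"
  shows "a div (s * M) = a' div (s * M)"
proof -
  have hit_iff: "(\<exists>j\<in>{a..t}. R j) \<longleftrightarrow> (\<exists>j\<in>{a'..t'}. R j)"
    if "indicator_row n R \<in> set (burst_tests n s M B K)" for R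
    using min_eq_imp_pos_iff[OF assms(1) sat[OF that]] by (simp add: interval_count_pos_iff)
  have "0 < M - 2"
    using assms(5) by (metis gr0I mult_0_right not_less0)
  then have "0 < s * M"
    using assms(1) by simp
  have "s * (M - 2) \<le> s * M"
    by simp
  then have window: "t \<le> a + s * M" "t' \<le> a' + s * M"
    using assms(3,5,6,8) by linarith+
  have "t \<le> n - 1" "t' \<le> n - 1"
    using assms(4,7) by linarith+
  then have tops: "t div (s * M) < 2 ^ K" "t' div (s * M) < 2 ^ K"
    using div_le_mono[of t "n - 1" "s * M"] div_le_mono[of t' "n - 1" "s * M"] assms(2) by linarith+
  show ?thesis
  proof (rule block_bits_determine_block[OF \<open>0 < s * M\<close> assms(3) window(1) assms(6) window(2) tops])
    fix i assume "i < K"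
    then show "(\<exists>j\<in>{a..t}. bit (j div (s * M)) i) \<longleftrightarrow> (\<exists>j\<in>{a'..t'}. bit (j div (s * M)) i)"
      by (intro hit_iff indicator_rows_in_burst_tests(3))
  next
    fix i assume "i < K"
    then show "(\<exists>j\<in>{a..t}. \<not> bit (j div (s * M)) i) \<longleftrightarrow> (\<exists>j\<in>{a'..t'}. \<not> bit (j div (s * M)) i)"
      by (intro hit_iff indicator_rows_in_burst_tests(4))
  qed
qed

lemma burst_tests_identify:
  fixes n l s M B K a t a' t' :: nat
  assumes "0 < s" "l \<le> s * (M - 2)" "min s n \<le> 2 ^ B" "(n - 1) div (s * M) < 2 ^ K"
    and "valid_burst n l a t" "valid_burst n l a' t'"
    and eq: "outcome_vec s (burst_tests n s M B K) (burst n a t) =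
      outcome_vec s (burst_tests n s M B K) (burst n a' t')"
  shows "a = a' \<and> t = t'"
proof -
  have bursts: "a \<le> t" "t < n" "t - a < s * (M - 2)" "a' \<le> t'" "t' < n" "t' - a' < s * (M - 2)"
    using assms(2,5,6) by (auto simp: valid_burst_def)
  have sat: "min (interval_count P a t) s = min (interval_count P a' t') s"
    if "indicator_row n P \<in> set (burst_tests n s M B K)" for P
    using outcome_vec_eq_imp_saturated_count_eq[OF eq bursts(2,5) that] .
  have "t - a = t' - a'" "a mod (s * M) = a' mod (s * M)"
    using burst_tests_determine_offset[OF assms(1,3) bursts] sat by blast+
  moreover have "a div (s * M) = a' div (s * M)"
    using burst_tests_determine_superblock[OF assms(1,4) bursts] sat by blast
  ultimately show ?thesis
    using bursts(1,4) by (metis div_mult_mod_eq le_add_diff_inverse)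
qed

lemma solves_burst_burst_tests:
  assumes "0 < s" "l \<le> s * (M - 2)" "min s n \<le> 2 ^ B" "(n - 1) div (s * M) < 2 ^ K"
  shows "solves_burst n l s (burst_tests n s M B K)"
  using burst_tests_identify[OF assms] unfolding solves_burst_def by blast

section \<open>Number of rows\<close>

lemma less_two_power_floorlog: "x < 2 ^ floorlog 2 x"
  by (cases "x = 0") (simp_all add: floorlog_bounds)

lemma floorlog_le_log:
  assumes "0 < x"
  shows "real (floorlog 2 x) \<le> log 2 (real x) + 1"
proof -
  have "0 \<le> log 2 (real x)"
    using assms by simp
  then show ?thesis
    using assms by (simp add: floorlog_def)
qed

lemma ceillog2_le_log_add_one:
  fixes m k :: nat
  assumes "0 < m" "m \<le> k"
  shows "real (ceillog2 m) \<le> log 2 (real k) + 1"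
proof -
  have "log 2 (real m) \<le> log 2 (real k)"
    using assms by simp
  then show ?thesis
    using ceillog2_less_log[OF assms(1)] by linarith
qed

lemma three_le_two_log2:
  fixes m :: nat
  assumes "3 \<le> m"
  shows "3 \<le> 2 * log 2 (real m)"
proof -
  have "(2::real) ^ 3 \<le> real m ^ 2"
    using power_mono[of 3 "real m" 2] assms by simp
  then have "3 \<le> log 2 (real m ^ 2)"
    using le_log_iff[of 2 "real m ^ 2" 3] assms by simp
  then show ?thesis
    using assms by (simp add: log_nat_power)
qed

lemma log2_div_add_log2_le:
  fixes k m :: nat
  assumes "0 < k div m"
  shows "log 2 (real (k div m)) + log 2 (real m) \<le> log 2 (real k)"
proof -
  have "0 < m"
    using assms by (auto intro: ccontr)
  have "k div m * m \<le> k"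
    by (rule div_times_less_eq_dividend)
  then have "real (k div m) * real m \<le> real k"
    by (metis of_nat_le_iff of_nat_mult)
  then have "log 2 (real (k div m) * real m) \<le> log 2 (real k)"
    using assms \<open>0 < m\<close> by (intro log_mono) simp_all
  then show ?thesis
    using assms \<open>0 < m\<close> by (simp add: log_mult)
qed

lemma burst_tests_size_bound:
  fixes n s l :: nat
  assumes "2 \<le> n" "0 < s"
  defines "M \<equiv> (l - 1) div s + 3"
  shows "real (M + ceillog2 (min s n) + 2 * floorlog 2 ((n - 1) div (s * M)))
    \<le> real l / real s + 2 * log 2 (real n) + 3"
proof -
  have "(l - 1) div s * s \<le> l"
    using div_times_less_eq_dividend[of "l - 1" s] by linarith
  then have "real ((l - 1) div s) \<le> real l / real s"
    using assms(2) by (simp add: le_divide_eq flip: of_nat_mult)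
  then have M_le: "real M \<le> real l / real s + 3"
    by (simp add: M_def)
  have B_le: "real (ceillog2 (min s n)) \<le> log 2 (real s) + 1"
    "real (ceillog2 (min s n)) \<le> log 2 (real n) + 1"
    using assms by (intro ceillog2_le_log_add_one; simp)+
  have logs: "1 \<le> log 2 (real n)" "0 \<le> log 2 (real s)" "3 \<le> 2 * log 2 (real M)"
    using assms three_le_two_log2[of M] by (simp_all add: M_def)
  define x where "x = (n - 1) div (s * M)"
  show ?thesis
  proof (cases "x = 0")
    case True
    then show ?thesis
      unfolding x_def[symmetric] using M_le B_le(2) logs by (simp add: floorlog_def)
  next
    case False
    then have "log 2 (real x) + log 2 (real (s * M)) \<le> log 2 (real (n - 1))"
      unfolding x_def by (intro log2_div_add_log2_le) simp
    moreover have "log 2 (real (n - 1)) \<le> log 2 (real n)"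
      using assms(1) by (intro log_mono) auto
    moreover have "0 < M"
      by (simp add: M_def)
    ultimately have "log 2 (real x) + log 2 (real s) + log 2 (real M) \<le> log 2 (real n)"
      using assms(2) by (simp add: log_mult)
    then show ?thesis
      unfolding x_def[symmetric] using floorlog_le_log[of x] False M_le B_le(1) logs by simp
  qed
qed

theorem mainTheorem10:
  fixes n s l :: nat
  assumes "n \<ge> 2" and "1 \<le> s" and "s < l"
  shows "\<exists>C :: bool list list.
           (\<forall>x \<in> set C. length x = n) \<and>
           real (length C) \<le> 2 * real l / real s + 2 * log 2 (real n) + 3 \<and>
           solves_burst n l s C"
proof -
  define M where "M = (l - 1) div s + 3"
  define B where "B = ceillog2 (min s n)"
  define K where "K = floorlog 2 ((n - 1) div (s * M))"
  have s: "0 < s"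
    using assms(2) by simp
  have "l \<le> s * (M - 2)"
    using le_mult_div_Suc[OF s, of l] assms(3) by (simp add: M_def)
  moreover have "min s n \<le> 2 ^ B"
    unfolding B_def by (rule le_two_power_ceillog2)
  moreover have "(n - 1) div (s * M) < 2 ^ K"
    unfolding K_def by (rule less_two_power_floorlog)
  ultimately have "solves_burst n l s (burst_tests n s M B K)"
    by (rule solves_burst_burst_tests[OF s])
  moreover have "real (length (burst_tests n s M B K)) \<le> 2 * real l / real s + 2 * log 2 (real n) + 3"
  proof -
    have "real l / real s \<le> 2 * real l / real s"
      by (simp add: divide_right_mono)
    then show ?thesis
      using burst_tests_size_bound[OF assms(1) s, of l] by (simp add: length_burst_tests M_def B_def K_def)
  qed
  ultimately show ?thesis
    using length_burst_tests_row by blast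
qed

end
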